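(* Let $M\in\mathbb R^{n\times n}$ be sufficient, $B$ a complementary basis with dictionary $D$, and let $i,j\in B$ be distinct such that $B'=(B\setminus\{i,j\})\cup\{\bar i,\bar j\}$ is a complementary basis. Then $$\dim\big(\mathcal C(B\setminus\{i\})\cap\mathcal C(B')\big)=n-1\iff D_{i\bar i}=0\ \text{ and }\ D_{j\bar i}<0 .$$
   Context: Let $M\in\mathbb R^{n\times n}$ and $A=[\,I\;\;-M\,]\in\mathbb R^{n\times 2n}$, with columns indexed by $\{1,\dots,2n\}$; for $J\subseteq\{1,\dots,2n\}$, $A_{\cdot J}$ denotes the submatrix of columns indexed by $J$. For $i\in\{1,\dots,2n\}$ the complementary index is $\bar i=i+n$ if $i\le n$ and $\bar i=i-n$ if $i>n$. A set $J$ is complementary if $i\in J$ implies $\bar i\notin J$. A complementary basis is a complementary set $B$ with $|B|=n$ and $A_{\cdot B}$ invertible; $N=\{1,\dots,2n\}\setminus B$. For a complementary set $J$, the complementary cone is $\mathcal C(J)=\{A_{\cdot J}\lambda:\lambda\ge 0\}$. For a complementary basis $B$, let $\beta=A_{\cdot B}^{-1}$ with rows indexed by $B$ (so $\beta_k A_{\cdot k'}=1$ if $k=k'$ and $0$ otherwise, for $k,k'\in B$); the dictionary of $B$ is $D=-\beta A_{\cdot N}$, with rows indexed by $B$ and columns indexed by $N$. The dimension of a convex set is the dimension of its affine hull. $M$ is column sufficient if $[z_i(Mz)_i\le 0\ \forall i]\Rightarrow[z_i(Mz)_i=0\ \forall i]$; row sufficient if $M^T$ is column sufficient; sufficient if both.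 *)

theory Defs
  imports "HOL-Analysis.Analysis"
begin

text \<open>Columns of A = [I, -M] are indexed by the sum type: Inl i is column i of I,
  Inr i is column i of -M (i.e. original index i+n).\<close>

definition colA :: "real^'n^'n \<Rightarrow> 'n + 'n \<Rightarrow> real^'n" where
  "colA M k = (case k of Inl i \<Rightarrow> axis i 1 | Inr i \<Rightarrow> - column i M)"

definition compl_idx :: "'n + 'n \<Rightarrow> 'n + 'n" where
  "compl_idx k = (case k of Inl i \<Rightarrow> Inr i | Inr i \<Rightarrow> Inl i)"

definition complementary :: "('n + 'n) set \<Rightarrow> bool" where
  "complementary J \<longleftrightarrow> (\<forall>k\<in>J. compl_idx k \<notin> J)"

text \<open>A_{.B} invertible: |B| = n and its columns are linearly independent.\<close>
definition comp_basis :: "real^'n^'n \<Rightarrow> ('n + 'n) set \<Rightarrow> bool" where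
  "comp_basis M B \<longleftrightarrow> complementary B \<and> card B = CARD('n) \<and>
     (\<forall>c. (\<Sum>k\<in>B. c k *\<^sub>R colA M k) = 0 \<longrightarrow> (\<forall>k\<in>B. c k = 0))"

definition comp_cone :: "real^'n^'n \<Rightarrow> ('n + 'n) set \<Rightarrow> (real^'n) set" where
  "comp_cone M J = {\<Sum>k\<in>J. c k *\<^sub>R colA M k | c. \<forall>k\<in>J. 0 \<le> c k}"

text \<open>beta_k v for k in B: the k-th entry of A_{.B}^{-1} v, i.e. the coefficient of
  column k in the unique representation of v in the columns of B.\<close>
definition beta :: "real^'n^'n \<Rightarrow> ('n + 'n) set \<Rightarrow> 'n + 'n \<Rightarrow> real^'n \<Rightarrow> real" where
  "beta M B k v = (THE x. (\<forall>l. l \<notin> B \<longrightarrow> x l = 0) \<and> v = (\<Sum>l\<in>B. x l *\<^sub>R colA M l)) k"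

text \<open>Dictionary D = - beta A_{.N}; entry (k,l) for k in B, l in N.\<close>
definition dict :: "real^'n^'n \<Rightarrow> ('n + 'n) set \<Rightarrow> 'n + 'n \<Rightarrow> 'n + 'n \<Rightarrow> real" where
  "dict M B k l = - beta M B k (colA M l)"

definition column_sufficient :: "real^'n^'n \<Rightarrow> bool" where
  "column_sufficient M \<longleftrightarrow>
     (\<forall>z. (\<forall>i. z$i * (M *v z)$i \<le> 0) \<longrightarrow> (\<forall>i. z$i * (M *v z)$i = 0))"

definition row_sufficient :: "real^'n^'n \<Rightarrow> bool" where
  "row_sufficient M \<longleftrightarrow> column_sufficient (transpose M)"

definition sufficient :: "real^'n^'n \<Rightarrow> bool" where
  "sufficient M \<longleftrightarrow> column_sufficient M \<and> row_sufficient M"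

end

theory Submission imports Defs begin

(* Write  A y = \<Sum>k y_k A_k  for y \<in> \<real>^{2n}, let S be the intersection of
   the cones C(B - {i}) and C(B'), and let x be the B-coordinates of the column A_{\<bar>i},
   so that x = - D_{. \<bar>i}.  S always lies in the (n-1)-dimensional cone C(B - {i}).
   (\<Leftarrow>) If x_i = 0 and x_j > 0, then S contains 0, the columns A_k for k \<in> B - {i,j},
   and a point v = A_{\<bar>i} + \<Sum>_{k \<in> B-{i,j}} |x_k| A_k; hence the span of S contains all
   columns of B - {i} and S has dimension n - 1.
   (\<Rightarrow>) Let v = A c = A d \<in> S with c \<ge> 0 supported on B' and d \<ge> 0 supported on B - {i},
   and suppose d_j > 0.  The vector y = c - d satisfies A y = 0 and y_k y_{\<bar>k} \<le> 0 for
   all k, so column sufficiency forces c_{\<bar>j} = 0; comparing B-coordinates of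
   A c = c_{\<bar>i} A_{\<bar>i} + \<dots> with d then yields x_i = 0 and x_j > 0.  Hence, if the sign
   condition fails, every point of S has d_j = 0, S lies in C(B - {i,j}) and has
   dimension at most n - 2. *)

section \<open>Linear combinations of the columns of A\<close>

definition lc :: "real^'n^'n \<Rightarrow> ('n + 'n \<Rightarrow> real) \<Rightarrow> real^'n" where
  "lc M y = (\<Sum>k\<in>UNIV. y k *\<^sub>R colA M k)"

lemma lc_restrict:
  assumes "\<forall>k. k \<notin> T \<longrightarrow> y k = 0"
  shows "lc M y = (\<Sum>k\<in>T. y k *\<^sub>R colA M k)"
  unfolding lc_def using assms by (intro sum.mono_neutral_right) auto

lemma lc_add: "lc M (\<lambda>k. y k + z k) = lc M y + lc M z"
  unfolding lc_def by (simp add: scaleR_add_left sum.distrib)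

lemma lc_diff: "lc M (\<lambda>k. y k - z k) = lc M y - lc M z"
  unfolding lc_def by (simp add: scaleR_diff_left sum_subtractf)

lemma lc_scale: "lc M (\<lambda>k. a * y k) = a *\<^sub>R lc M y"
  unfolding lc_def by (simp add: scaleR_sum_right)

lemma lc_pick: "lc M y = y l *\<^sub>R colA M l + lc M (y(l := 0))"
proof -
  have single: "lc M (\<lambda>k. if k = l then 1 else 0) = colA M l"
    by (subst lc_restrict[where T="{l}"]) auto
  have "y = (\<lambda>k. y l * (if k = l then 1 else 0) + (y(l := 0)) k)" by auto
  then have "lc M y = lc M (\<lambda>k. y l * (if k = l then 1 else 0)) + lc M (y(l := 0))"
    by (metis lc_add)
  then show ?thesis by (simp only: lc_scale single)
qed

lemma lc_split: "lc M y = (\<chi> m. y (Inl m)) - M *v (\<chi> m. y (Inr m))"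
proof -
  have "lc M y = (\<Sum>k\<in>(UNIV <+> UNIV). y k *\<^sub>R colA M k)"
    unfolding lc_def UNIV_Plus_UNIV ..
  also have "\<dots> = (\<Sum>m\<in>UNIV. y (Inl m) *\<^sub>R axis m 1) + (\<Sum>m\<in>UNIV. y (Inr m) *\<^sub>R (- column m M))"
    by (subst sum.Plus) (auto simp: colA_def o_def)
  also have "(\<Sum>m\<in>UNIV. y (Inl m) *\<^sub>R axis m 1) = (\<chi> m. y (Inl m))"
    by (simp add: vec_eq_iff axis_def if_distrib cong: if_cong)
  also have "(\<Sum>m\<in>UNIV. y (Inr m) *\<^sub>R (- column m M)) = - (M *v (\<chi> m. y (Inr m)))"
    by (simp add: matrix_mult_sum scalar_mult_eq_scaleR sum_negf)
  finally show ?thesis by simp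
qed

lemma lc_in_span:
  assumes "\<forall>k. k \<notin> J \<longrightarrow> y k = 0" and "colA M ` J \<subseteq> span S"
  shows "lc M y \<in> span S"
  unfolding lc_restrict[OF assms(1)] using assms(2) by (intro span_sum span_scale) auto

section \<open>Complementary cones\<close>

lemma comp_cone_iff: "v \<in> comp_cone M J \<longleftrightarrow>
   (\<exists>y. (\<forall>k. k \<notin> J \<longrightarrow> y k = 0) \<and> (\<forall>k\<in>J. 0 \<le> y k) \<and> v = lc M y)"
proof
  assume "v \<in> comp_cone M J"
  then obtain c where c: "v = (\<Sum>k\<in>J. c k *\<^sub>R colA M k)" "\<forall>k\<in>J. 0 \<le> c k"
    unfolding comp_cone_def by blast
  define y where "y = (\<lambda>k. if k \<in> J then c k else 0)"
  have "lc M y = (\<Sum>k\<in>J. y k *\<^sub>R colA M k)" by (rule lc_restrict) (simp add: y_def)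
  also have "\<dots> = v" unfolding c y_def by (rule sum.cong) auto
  finally show "\<exists>y. (\<forall>k. k \<notin> J \<longrightarrow> y k = 0) \<and> (\<forall>k\<in>J. 0 \<le> y k) \<and> v = lc M y"
    using c by (intro exI[of _ y]) (auto simp: y_def)
next
  assume "\<exists>y. (\<forall>k. k \<notin> J \<longrightarrow> y k = 0) \<and> (\<forall>k\<in>J. 0 \<le> y k) \<and> v = lc M y"
  then obtain y where y: "\<forall>k. k \<notin> J \<longrightarrow> y k = 0" "\<forall>k\<in>J. 0 \<le> y k" "v = lc M y" by blast
  show "v \<in> comp_cone M J" unfolding comp_cone_def
    using y lc_restrict[OF y(1), of M] by blast
qed

lemma zero_in_comp_cone: "0 \<in> comp_cone M J"
  unfolding comp_cone_def by (intro CollectI exI[of _ "\<lambda>_. 0::real"]) simp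

lemma column_in_comp_cone:
  assumes "k \<in> J" shows "colA M k \<in> comp_cone M J"
proof -
  have "colA M k = lc M ((\<lambda>_. 0)(k := 1))" using lc_pick[of M "(\<lambda>_. 0)(k := 1)" k]
    by (simp add: lc_def)
  then show ?thesis unfolding comp_cone_iff using assms
    by (intro exI[of _ "(\<lambda>_. 0)(k := 1)"]) auto
qed

lemma comp_cone_subset_span: "comp_cone M J \<subseteq> span (colA M ` J)"
proof
  fix v assume "v \<in> comp_cone M J"
  then obtain y where "\<forall>k. k \<notin> J \<longrightarrow> y k = 0" "v = lc M y" unfolding comp_cone_iff by blast
  then show "v \<in> span (colA M ` J)" using lc_in_span[OF _ span_superset] by blast
qed

lemma aff_dim_le_comp_cone:
  assumes "S \<subseteq> comp_cone M J" "finite J"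
  shows "aff_dim S \<le> int (card J)"
proof -
  have "aff_dim S \<le> aff_dim (span (colA M ` J))"
    using assms(1) comp_cone_subset_span by (intro aff_dim_subset) blast
  also have "\<dots> = int (dim (colA M ` J))" by (simp add: aff_dim_subspace)
  also have "dim (colA M ` J) \<le> card (colA M ` J)"
    using dim_le_card[OF span_superset] assms(2) by blast
  also have "card (colA M ` J) \<le> card J" using assms(2) by (rule card_image_le)
  finally show ?thesis by simp
qed

section \<open>Coordinates with respect to a complementary basis\<close>

lemma comp_basis_lc_zero:
  assumes "comp_basis M B" "\<forall>k. k \<notin> B \<longrightarrow> y k = 0" "lc M y = 0"
  shows "y k = 0"
  using assms lc_restrict[OF assms(2), of M] unfolding comp_basis_def
  by (cases "k \<in> B") auto

lemma comp_basis_coords_unique: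
  assumes "comp_basis M B" "\<forall>k. k \<notin> B \<longrightarrow> x k = 0" "\<forall>k. k \<notin> B \<longrightarrow> y k = 0"
    and "lc M x = lc M y"
  shows "x = y"
proof
  fix k
  have "lc M (\<lambda>k. x k - y k) = 0" using assms(4) by (simp add: lc_diff)
  then have "x k - y k = 0" using assms(1-3) by (intro comp_basis_lc_zero[of M B]) auto
  then show "x k = y k" by simp
qed

lemma comp_basis_inj: assumes "comp_basis M B" shows "inj_on (colA M) B"
proof (rule inj_onI, rule ccontr)
  fix k l assume kl: "k \<in> B" "l \<in> B" "colA M k = colA M l" "k \<noteq> l"
  define y where "y = (\<lambda>m. if m = k then 1 else if m = l then -1 else (0::real))"
  have "lc M y = (\<Sum>m\<in>{k,l}. y m *\<^sub>R colA M m)" by (rule lc_restrict) (simp add: y_def)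
  also have "\<dots> = 0" using kl by (simp add: y_def)
  finally have "y k = 0" using assms kl by (intro comp_basis_lc_zero[of M B]) (auto simp: y_def)
  then show False by (simp add: y_def)
qed

lemma comp_basis_independent: assumes "comp_basis M B" shows "independent (colA M ` B)"
proof
  assume "dependent (colA M ` B)"
  then obtain u where u: "\<exists>v\<in>colA M ` B. u v \<noteq> 0" "(\<Sum>v\<in>colA M ` B. u v *\<^sub>R v) = 0"
    using dependent_finite[of "colA M ` B"] by auto
  define y where "y = (\<lambda>k. if k \<in> B then u (colA M k) else 0)"
  have "lc M y = (\<Sum>k\<in>B. u (colA M k) *\<^sub>R colA M k)"
    by (subst lc_restrict[of B]) (simp_all add: y_def)
  also have "\<dots> = (\<Sum>v\<in>colA M ` B. u v *\<^sub>R v)"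
    by (simp add: sum.reindex[OF comp_basis_inj[OF assms]])
  finally have "lc M y = 0" using u by simp
  then have "\<And>k. y k = 0" using assms by (intro comp_basis_lc_zero[of M B]) (auto simp: y_def)
  moreover obtain k where "k \<in> B" "u (colA M k) \<noteq> 0" using u(1) by blast
  ultimately show False by (metis y_def)
qed

lemma comp_basis_span: assumes "comp_basis M B" shows "span (colA M ` B) = UNIV"
proof -
  have "card (colA M ` B) = CARD('a)"
    using assms comp_basis_inj[OF assms] card_image unfolding comp_basis_def by metis
  then have "UNIV \<subseteq> span (colA M ` B)"
    using card_eq_dim[of "colA M ` B" UNIV] comp_basis_independent[OF assms] by simp
  then show ?thesis by auto
qed

lemma beta_coords:
  assumes "comp_basis M B"
  shows "(\<forall>k. k \<notin> B \<longrightarrow> beta M B k v = 0) \<and> v = lc M (\<lambda>k. beta M B k v)"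
proof -
  have "v \<in> span (colA M ` B)" using comp_basis_span[OF assms] by simp
  then obtain u where u: "v = (\<Sum>w\<in>colA M ` B. u w *\<^sub>R w)"
    using span_finite[of "colA M ` B"] by auto
  define x where "x = (\<lambda>k. if k \<in> B then u (colA M k) else 0)"
  have x0: "\<forall>k. k \<notin> B \<longrightarrow> x k = 0" by (simp add: x_def)
  have "v = (\<Sum>k\<in>B. x k *\<^sub>R colA M k)"
    unfolding u x_def by (simp add: sum.reindex[OF comp_basis_inj[OF assms]])
  then have vx: "v = lc M x" using lc_restrict[OF x0] by simp
  have "(THE x. (\<forall>l. l \<notin> B \<longrightarrow> x l = 0) \<and> v = (\<Sum>l\<in>B. x l *\<^sub>R colA M l)) = x"
  proof (rule the_equality)
    show "(\<forall>l. l \<notin> B \<longrightarrow> x l = 0) \<and> v = (\<Sum>l\<in>B. x l *\<^sub>R colA M l)"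
      using x0 vx lc_restrict[OF x0, of M] by simp
  next
    fix x' assume "(\<forall>l. l \<notin> B \<longrightarrow> x' l = 0) \<and> v = (\<Sum>l\<in>B. x' l *\<^sub>R colA M l)"
    then show "x' = x"
      using comp_basis_coords_unique[OF assms _ x0] vx lc_restrict[of B x' M] by metis
  qed
  then have "\<And>k. beta M B k v = x k" unfolding beta_def by simp
  then show ?thesis using x0 vx by (simp add: eq_commute[of v])
qed

section \<open>Complementary indices and column sufficiency\<close>

lemma compl_compl[simp]: "compl_idx (compl_idx k) = k"
  by (cases k) (auto simp: compl_idx_def)

lemma compl_neq[simp]: "compl_idx k \<noteq> k" "k \<noteq> compl_idx k"
  by (cases k; auto simp: compl_idx_def)+

lemma compl_inj: "compl_idx a = compl_idx b \<longleftrightarrow> a = b"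
  by (metis compl_compl)

lemma column_sufficient_lc:
  assumes "column_sufficient M" "lc M y = 0" "\<forall>k. y k * y (compl_idx k) \<le> 0"
  shows "y k * y (compl_idx k) = 0"
proof -
  define u where "u = (\<chi> m. y (Inr m))"
  have Mu: "M *v u = (\<chi> m. y (Inl m))" using lc_split[of M y] assms(2) by (simp add: u_def)
  have "\<forall>m. u$m * (M *v u)$m \<le> 0"
  proof
    fix m show "u$m * (M *v u)$m \<le> 0"
      using spec[OF assms(3), of "Inl m"] unfolding Mu unfolding u_def
      by (simp add: compl_idx_def mult.commute)
  qed
  then have "\<forall>m. u$m * (M *v u)$m = 0" using assms(1) unfolding column_sufficient_def by blast
  then show ?thesis unfolding Mu unfolding u_def
    by (cases k) (auto simp: compl_idx_def mult.commute)
qed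

lemma complementary_support_products:
  fixes y :: "'n + 'n \<Rightarrow> real"
  assumes "\<forall>k. k \<notin> J \<longrightarrow> y k = 0" "complementary (J - {p})" "k \<noteq> p" "compl_idx k \<noteq> p"
  shows "y k * y (compl_idx k) = 0"
proof (rule ccontr)
  assume "y k * y (compl_idx k) \<noteq> 0"
  then have "k \<in> J - {p}" "compl_idx k \<in> J - {p}" using assms(1,3,4) by auto
  then show False using assms(2) unfolding complementary_def by blast
qed

lemma common_point_avoids_compl_j:
  assumes cs: "column_sufficient M" and B: "complementary B"
    and i: "i \<in> B" and j: "j \<in> B" and ij: "i \<noteq> j"
    and c: "\<forall>k. k \<notin> (B - {i, j}) \<union> {compl_idx i, compl_idx j} \<longrightarrow> c k = 0"
      "0 \<le> c (compl_idx j)"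
    and d: "\<forall>k. k \<notin> B - {i} \<longrightarrow> d k = 0" "d j > 0"
    and cd: "lc M c = lc M d"
  shows "c (compl_idx j) = 0"
proof -
  define y where "y = (\<lambda>k. c k - d k)"
  have compB: "\<forall>k\<in>B. compl_idx k \<notin> B" using B by (simp add: complementary_def)
  have ly: "lc M y = 0" unfolding y_def lc_diff using cd by simp
  have ysupp: "\<forall>k. k \<notin> (B - {i}) \<union> {compl_idx i, compl_idx j} \<longrightarrow> y k = 0"
    using c(1) d(1) by (auto simp: y_def)
  have "(B - {i}) \<union> {compl_idx i, compl_idx j} - {compl_idx j} = (B - {i}) \<union> {compl_idx i}"
    using compB i j ij by (auto simp: compl_inj)
  moreover have "complementary ((B - {i}) \<union> {compl_idx i})"
    using compB i unfolding complementary_def by (auto simp: compl_inj)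
  ultimately have compl: "complementary ((B - {i}) \<union> {compl_idx i, compl_idx j} - {compl_idx j})"
    by simp
  have "j \<noteq> compl_idx i" using compB i j by metis
  then have yj: "y j = - d j" "y (compl_idx j) = c (compl_idx j)"
    using c(1) d(1) compB j by (auto simp: y_def)
  have pair: "y j * y (compl_idx j) \<le> 0"
    using yj c(2) d(2) by (simp add: mult_nonpos_nonneg)
  have "\<forall>k. y k * y (compl_idx k) \<le> 0"
  proof
    fix k
    show "y k * y (compl_idx k) \<le> 0"
    proof (cases "k = j \<or> k = compl_idx j")
      case True then show ?thesis using pair by (auto simp: mult.commute)
    next
      case False
      then have "y k * y (compl_idx k) = 0"
        by (intro complementary_support_products[OF ysupp compl]) (auto simp: compl_inj)
      then show ?thesis by linarith
    qed
  qed
  then have "y j * y (compl_idx j) = 0" using column_sufficient_lc[OF cs ly] by blast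
  then show ?thesis using yj d(2) by simp
qed

lemma common_point_dict_signs:
  assumes B: "comp_basis M B" and i: "i \<in> B" and j: "j \<in> B" and ij: "i \<noteq> j"
    and c: "\<forall>k. k \<notin> insert (compl_idx i) (B - {i, j}) \<longrightarrow> c k = 0" "0 \<le> c (compl_idx i)"
    and d: "\<forall>k. k \<notin> B - {i} \<longrightarrow> d k = 0" "d j > 0"
    and cd: "lc M c = lc M d"
  shows "dict M B i (compl_idx i) = 0 \<and> dict M B j (compl_idx i) < 0"
proof -
  define x where "x = (\<lambda>k. beta M B k (colA M (compl_idx i)))"
  define a where "a = c (compl_idx i)"
  define c' where "c' = c(compl_idx i := 0)"
  have x: "\<forall>k. k \<notin> B \<longrightarrow> x k = 0" "colA M (compl_idx i) = lc M x"
    using beta_coords[OF B] unfolding x_def by blast+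
  have c': "\<forall>k. k \<notin> B - {i, j} \<longrightarrow> c' k = 0" using c(1) by (auto simp: c'_def)
  have "lc M c = a *\<^sub>R colA M (compl_idx i) + lc M c'"
    unfolding a_def c'_def by (rule lc_pick)
  also have "\<dots> = lc M (\<lambda>k. a * x k + c' k)" using x(2) by (simp add: lc_add lc_scale)
  finally have same: "lc M (\<lambda>k. a * x k + c' k) = lc M d" using cd by simp
  have "\<forall>k. k \<notin> B \<longrightarrow> a * x k + c' k = 0" using x(1) c' by simp
  moreover have "\<forall>k. k \<notin> B \<longrightarrow> d k = 0" using d(1) by simp
  ultimately have coef: "(\<lambda>k. a * x k + c' k) = d"
    using same by (rule comp_basis_coords_unique[OF B])
  have ai: "a * x i = 0" using fun_cong[OF coef, of i] c' d(1) by simp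
  have aj: "a * x j = d j" using fun_cong[OF coef, of j] c' by simp
  have apos: "a > 0"
    using c(2) aj d(2) unfolding a_def by (metis less_eq_real_def mult_zero_left)
  have "x i = 0" using ai apos by simp
  moreover have "x j > 0" using aj apos d(2) by (metis zero_less_mult_pos)
  ultimately show ?thesis by (simp add: dict_def x_def)
qed

lemma cone_intersection_in_face:
  assumes cs: "column_sufficient M" and B: "comp_basis M B"
    and i: "i \<in> B" and j: "j \<in> B" and ij: "i \<noteq> j"
    and signs: "\<not> (dict M B i (compl_idx i) = 0 \<and> dict M B j (compl_idx i) < 0)"
  shows "comp_cone M (B - {i}) \<inter> comp_cone M ((B - {i, j}) \<union> {compl_idx i, compl_idx j})
           \<subseteq> comp_cone M (B - {i, j})"
proof
  fix v assume "v \<in> comp_cone M (B - {i}) \<inter> comp_cone M ((B - {i, j}) \<union> {compl_idx i, compl_idx j})"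
  then have v1: "v \<in> comp_cone M (B - {i})"
    and v2: "v \<in> comp_cone M ((B - {i, j}) \<union> {compl_idx i, compl_idx j})" by auto
  obtain c where
      c: "\<forall>k. k \<notin> (B - {i, j}) \<union> {compl_idx i, compl_idx j} \<longrightarrow> c k = 0"
         "\<forall>k\<in>(B - {i, j}) \<union> {compl_idx i, compl_idx j}. 0 \<le> c k" "v = lc M c"
    using v2 unfolding comp_cone_iff by blast
  obtain d where d: "\<forall>k. k \<notin> B - {i} \<longrightarrow> d k = 0" "\<forall>k\<in>B - {i}. 0 \<le> d k" "v = lc M d"
    using v1 unfolding comp_cone_iff by blast
  have cd: "lc M c = lc M d" using c(3) d(3) by simp
  have dj: "d j = 0"
  proof (rule ccontr)
    assume "d j \<noteq> 0"
    moreover have "0 \<le> d j" using d(2) j ij by simp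
    ultimately have dpos: "d j > 0" by linarith
    have compl: "complementary B" using B by (simp add: comp_basis_def)
    have "c (compl_idx j) = 0"
      using common_point_avoids_compl_j[OF cs compl i j ij c(1) _ d(1) dpos cd] c(2) by simp
    then have "\<forall>k. k \<notin> insert (compl_idx i) (B - {i, j}) \<longrightarrow> c k = 0" using c(1) by auto
    moreover have "0 \<le> c (compl_idx i)" using c(2) by simp
    ultimately show False
      using common_point_dict_signs[OF B i j ij _ _ d(1) dpos cd] signs by blast
  qed
  then show "v \<in> comp_cone M (B - {i, j})"
    unfolding comp_cone_iff using d by (intro exI[of _ d]) auto
qed

lemma aff_dim_ge_if_spans_facet:
  fixes M :: "real^'n^'n"
  assumes B: "comp_basis M B" and i: "i \<in> B" and S: "0 \<in> S" "colA M ` (B - {i}) \<subseteq> span S"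
  shows "int CARD('n) - 1 \<le> aff_dim S"
proof -
  have inj: "inj_on (colA M) (B - {i})" by (rule inj_on_subset[OF comp_basis_inj[OF B]]) blast
  have indep: "independent (colA M ` (B - {i}))"
    by (rule independent_mono[OF comp_basis_independent[OF B]]) blast
  have "CARD('n) - 1 = card (colA M ` (B - {i}))"
    using B i card_image[OF inj] by (simp add: comp_basis_def)
  also have "\<dots> = dim (colA M ` (B - {i}))" by (simp add: dim_eq_card_independent[OF indep])
  also have "\<dots> \<le> dim S" using dim_subset[OF S(2)] by simp
  finally have "CARD('n) - 1 \<le> dim S" .
  moreover have "aff_dim S = int (dim S)" using aff_dim_eq_dim[of 0 S] S(1) by (simp add: hull_inc)
  moreover have "CARD('n) \<ge> 1" by simp
  ultimately show ?thesis by linarith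
qed

lemma cone_intersection_lower_bound:
  fixes M :: "real^'n^'n"
  assumes B: "comp_basis M B" and i: "i \<in> B" and j: "j \<in> B" and ij: "i \<noteq> j"
    and signs: "dict M B i (compl_idx i) = 0" "dict M B j (compl_idx i) < 0"
  shows "int CARD('n) - 1
           \<le> aff_dim (comp_cone M (B - {i}) \<inter> comp_cone M ((B - {i, j}) \<union> {compl_idx i, compl_idx j}))"
    (is "_ \<le> aff_dim ?S")
proof -
  define x where "x = (\<lambda>k. beta M B k (colA M (compl_idx i)))"
  have x: "\<forall>k. k \<notin> B \<longrightarrow> x k = 0" "colA M (compl_idx i) = lc M x"
    using beta_coords[OF B] unfolding x_def by blast+
  have xi: "x i = 0" and xj: "x j > 0" using signs by (simp_all add: dict_def x_def)
  have compB: "\<forall>k\<in>B. compl_idx k \<notin> B" using B by (simp add: comp_basis_def complementary_def)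
  have "colA M k \<in> ?S" if "k \<in> B - {i, j}" for k
    using that by (intro IntI column_in_comp_cone) auto
  then have face: "colA M ` (B - {i, j}) \<subseteq> span ?S" by (auto intro: span_base)
  define lam where "lam = (\<lambda>k. if k \<in> B - {i, j} then \<bar>x k\<bar> else 0)"
  have lam0: "\<forall>k. k \<notin> B - {i, j} \<longrightarrow> lam k = 0" by (simp add: lam_def)
  have lam_ii: "lam (compl_idx i) = 0" using compB i by (simp add: lam_def)
  define v where "v = colA M (compl_idx i) + lc M lam"
  have "v = lc M (\<lambda>k. x k + lam k)" unfolding v_def lc_add x(2) ..
  moreover have "\<forall>k. k \<notin> B - {i} \<longrightarrow> x k + lam k = 0"
  proof (intro allI impI)
    fix k assume "k \<notin> B - {i}"
    then have "x k = 0" "lam k = 0" using x(1) xi lam0 by auto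
    then show "x k + lam k = 0" by simp
  qed
  moreover have "\<forall>k\<in>B - {i}. 0 \<le> x k + lam k"
    using xj by (auto simp: lam_def)
  ultimately have v1: "v \<in> comp_cone M (B - {i})"
    unfolding comp_cone_iff by (intro exI[of _ "\<lambda>k. x k + lam k"]) simp
  have "v = lc M (lam(compl_idx i := 1))"
    using lc_pick[of M "lam(compl_idx i := 1)" "compl_idx i"] by (simp add: v_def fun_upd_idem[of lam, OF lam_ii])
  then have v2: "v \<in> comp_cone M ((B - {i, j}) \<union> {compl_idx i, compl_idx j})"
    unfolding comp_cone_iff by (intro exI[of _ "lam(compl_idx i := 1)"]) (auto simp: lam_def)
  text \<open>Hence A_{\<bar>i} and then A_j = (A_{\<bar>i} - \<Sum>_{k \<in> B-{i,j}} x_k A_k) / x_j lie in span S.\<close>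
  have "colA M (compl_idx i) = v - lc M lam" by (simp add: v_def)
  also have "\<dots> \<in> span ?S"
    using v1 v2 by (intro span_diff span_base lc_in_span[OF lam0 face]) auto
  finally have ii_span: "colA M (compl_idx i) \<in> span ?S" .
  have "x j *\<^sub>R colA M j = colA M (compl_idx i) - lc M (x(j := 0))"
    using lc_pick[of M x j] x(2) by simp
  also have "\<dots> \<in> span ?S"
    using x(1) xi by (intro span_diff ii_span lc_in_span[OF _ face]) auto
  finally have "(1 / x j) *\<^sub>R (x j *\<^sub>R colA M j) \<in> span ?S" by (rule span_scale)
  then have "colA M j \<in> span ?S" using xj by simp
  then have "colA M ` (B - {i}) \<subseteq> span ?S" using face by auto
  moreover have "0 \<in> ?S" by (simp add: zero_in_comp_cone)
  ultimately show ?thesis by (rule aff_dim_ge_if_spans_facet[OF B i, rotated])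
qed

theorem mainTheorem3:
  fixes M :: "real^'n^'n" and B :: "('n + 'n) set" and i j :: "'n + 'n"
  assumes "sufficient M"
    and "comp_basis M B"
    and "i \<in> B" and "j \<in> B" and "i \<noteq> j"
    and "comp_basis M ((B - {i, j}) \<union> {compl_idx i, compl_idx j})"
  shows "aff_dim (comp_cone M (B - {i}) \<inter> comp_cone M ((B - {i, j}) \<union> {compl_idx i, compl_idx j}))
           = int CARD('n) - 1
         \<longleftrightarrow> dict M B i (compl_idx i) = 0 \<and> dict M B j (compl_idx i) < 0"
  (is "aff_dim ?S = _ \<longleftrightarrow> ?signs")
proof -
  note B = assms(2) and i = assms(3) and j = assms(4) and ij = assms(5)
  have cs: "column_sufficient M" using assms(1) by (simp add: sufficient_def)
  have cardB: "card B = CARD('n)" using B by (simp add: comp_basis_def)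
  have "card {i, j} \<le> card B" using i j by (intro card_mono) auto
  then have n2: "CARD('n) \<ge> 2" using ij cardB by simp
  have upper: "aff_dim ?S \<le> int CARD('n) - 1"
    using aff_dim_le_comp_cone[of ?S M "B - {i}"] cardB i n2 by fastforce
  have "aff_dim ?S \<le> int CARD('n) - 2" if "\<not> ?signs"
  proof -
    have "card (B - {i, j}) = CARD('n) - 2" using cardB i j ij by (simp add: card_Diff_subset)
    then show ?thesis
      using aff_dim_le_comp_cone[OF cone_intersection_in_face[OF cs B i j ij that]] n2 by simp
  qed
  moreover have "int CARD('n) - 1 \<le> aff_dim ?S" if ?signs
    using cone_intersection_lower_bound[OF B i j ij] that by blast
  ultimately show ?thesis using upper by fastforce
qed

end
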